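(* Let $\mathcal H$ be the $5$-uniform hypergraph defined below, let $e,f$ be two edges of $\mathcal{H}$, and let $\phi : V(\mathcal{H}_{ef}) \to V(\mathcal{H})$ be a monomorphism. If $\phi(e') = e'$ for every edge $e' \in \mathcal{H}_{ef}$, then $\phi$ is the identity.
   Context: $\mathcal{H}$ has vertex set $\{z, v_1,\dots,v_9\}$ and edges $r=\{z,v_1,v_3,v_5,v_8\}$, $g=\{z,v_2,v_4,v_7,v_9\}$, $a=\{v_1,v_4,v_6,v_8,v_9\}$, $b=\{v_9,v_1,v_2,v_3,v_4\}$, and $e_i=\{v_i,v_{i+1},v_{i+2},v_{i+3},v_{i+4}\}$ for $i=1,\dots,5$. $\mathcal{H}_{ef}$ is the hypergraph with edge set $E(\mathcal H)\setminus\{e,f\}$, and $V(\mathcal H_{ef})$ is the union of its edges. A monomorphism $\phi: V(\mathcal{H}_{ef})\to V(\mathcal{H})$ is an injective map such that $\phi(x):=\{\phi(y): y\in x\}$ is an edge of $\mathcal H$ for every edge $x$ of $\mathcal H_{ef}$; "identity" means $\phi(y)=y$ for all $y\in V(\mathcal H_{ef})$. *)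

theory Defs
  imports Main
begin

text \<open>Vertices: z is encoded as 0 and v_i as the natural number i (1 \<le> i \<le> 9).\<close>

definition z :: nat where "z = 0"

definition edge_r :: "nat set" where "edge_r = {z, 1, 3, 5, 8}"
definition edge_g :: "nat set" where "edge_g = {z, 2, 4, 7, 9}"
definition edge_a :: "nat set" where "edge_a = {1, 4, 6, 8, 9}"
definition edge_b :: "nat set" where "edge_b = {9, 1, 2, 3, 4}"
definition edge_e :: "nat \<Rightarrow> nat set" where "edge_e i = {i, i+1, i+2, i+3, i+4}"

definition H_edges :: "nat set set" where
  "H_edges = {edge_r, edge_g, edge_a, edge_b} \<union> {edge_e i | i. 1 \<le> i \<and> i \<le> 5}"

definition H_vertices :: "nat set" where
  "H_vertices = insert z {1..9}"

definition H_minus_edges :: "nat set \<Rightarrow> nat set \<Rightarrow> nat set set" where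
  "H_minus_edges e f = H_edges - {e, f}"

definition H_minus_vertices :: "nat set \<Rightarrow> nat set \<Rightarrow> nat set" where
  "H_minus_vertices e f = \<Union> (H_minus_edges e f)"

definition monomorphism :: "nat set \<Rightarrow> nat set \<Rightarrow> (nat \<Rightarrow> nat) \<Rightarrow> bool" where
  "monomorphism e f \<phi> \<longleftrightarrow>
     inj_on \<phi> (H_minus_vertices e f) \<and>
     \<phi> ` H_minus_vertices e f \<subseteq> H_vertices \<and>
     (\<forall>x \<in> H_minus_edges e f. \<phi> ` x \<in> H_edges)"

end

theory Submission
  imports Defs
begin

text \<open>A map that is injective on the vertices of a hypergraph and maps every edge onto itself
  keeps each vertex inside exactly the edges that contained it. Every two vertices of H are
  distinguished by at least three edges (one contains the vertex, the other does not), so after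
  deleting any two edges some edge still distinguishes them; hence each vertex is fixed.\<close>

definition separating_edges :: "'a set set \<Rightarrow> 'a \<Rightarrow> 'a \<Rightarrow> 'a set set" where
  "separating_edges E u w = {x \<in> E. (u \<in> x) \<noteq> (w \<in> x)}"

lemma separating_edges_Diff_nonempty:
  assumes "finite E" "3 \<le> card (separating_edges E u w)"
  shows "separating_edges (E - {e, f}) u w \<noteq> {}"
proof
  assume "separating_edges (E - {e, f}) u w = {}"
  then have "separating_edges E u w \<subseteq> {e, f}"
    unfolding separating_edges_def by auto
  then have "card (separating_edges E u w) \<le> card {e, f}"
    using assms(1) by (intro card_mono) (auto simp: separating_edges_def)
  also have "\<dots> \<le> 2"
    by (simp add: card_insert_le_m1)
  finally show False
    using assms(2) by simp
qed

lemma edge_fixing_map_preserves_membership: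
  assumes "inj_on \<phi> (\<Union>E)" "\<forall>x \<in> E. \<phi> ` x = x" "x \<in> E" "y \<in> \<Union>E"
  shows "\<phi> y \<in> x \<longleftrightarrow> y \<in> x"
proof
  assume "\<phi> y \<in> x"
  then obtain v where "v \<in> x" "\<phi> v = \<phi> y"
    using assms(2,3) by (metis imageE)
  moreover have "v \<in> \<Union>E"
    using \<open>v \<in> x\<close> assms(3) by blast
  ultimately show "y \<in> x"
    using assms(1,4) by (metis inj_onD)
qed (use assms(2,3) in blast)

lemma separating_edges_edge_fixing_map_empty:
  assumes "inj_on \<phi> (\<Union>E)" "\<forall>x \<in> E. \<phi> ` x = x" "y \<in> \<Union>E"
  shows "separating_edges E (\<phi> y) y = {}"
  using edge_fixing_map_preserves_membership[OF assms(1,2) _ assms(3)]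
  unfolding separating_edges_def by blast

definition H_edge_list :: "nat set list" where
  "H_edge_list = [{0,1,3,5,8}, {0,2,4,7,9}, {1,4,6,8,9}, {9,1,2,3,4},
     {1,2,3,4,5}, {2,3,4,5,6}, {3,4,5,6,7}, {4,5,6,7,8}, {5,6,7,8,9}]"

lemma H_edge_list_eq:
  "H_edge_list = [edge_r, edge_g, edge_a, edge_b, edge_e 1, edge_e 2, edge_e 3, edge_e 4, edge_e 5]"
  unfolding H_edge_list_def edge_r_def edge_g_def edge_a_def edge_b_def edge_e_def z_def
  by (simp add: numeral_eq_Suc)

lemma H_edges_eq_set_H_edge_list: "H_edges = set H_edge_list"
proof -
  have "{edge_e i | i. 1 \<le> i \<and> i \<le> 5} = edge_e ` {1..5}"
    by auto
  also have "{1..5::nat} = {1, 2, 3, 4, 5}"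
    by auto
  finally show ?thesis
    unfolding H_edges_def H_edge_list_eq by (simp only: set_simps) blast
qed

lemma distinct_H_edge_list: "distinct H_edge_list"
  unfolding H_edge_list_def by code_simp

lemma H_separating_edges_count_list:
  "list_all (\<lambda>u. list_all (\<lambda>w. u = w \<or>
      3 \<le> length (filter (\<lambda>x. (u \<in> x) \<noteq> (w \<in> x)) H_edge_list)) [0..<10]) [0..<10]"
  unfolding H_edge_list_def by code_simp

lemma H_separating_edges_card:
  assumes "u \<in> H_vertices" "w \<in> H_vertices" "u \<noteq> w"
  shows "3 \<le> card (separating_edges H_edges u w)"
proof -
  have "u \<in> set [0..<10]" "w \<in> set [0..<10]"
    using assms(1,2) unfolding H_vertices_def z_def by auto
  then have "3 \<le> length (filter (\<lambda>x. (u \<in> x) \<noteq> (w \<in> x)) H_edge_list)"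
    using H_separating_edges_count_list assms(3) unfolding list_all_iff by blast
  also have "\<dots> = card (separating_edges H_edges u w)"
    using distinct_H_edge_list
    by (simp add: distinct_card[symmetric] separating_edges_def H_edges_eq_set_H_edge_list
        set_filter)
  finally show ?thesis .
qed

lemma finite_H_edges: "finite H_edges"
  unfolding H_edges_eq_set_H_edge_list by (rule finite_set)

lemma H_vertices_cover: "\<Union>H_edges \<subseteq> H_vertices"
  unfolding H_edges_eq_set_H_edge_list H_edge_list_def H_vertices_def z_def
  by simp

theorem lemma4p4:
  assumes "e \<in> H_edges" and "f \<in> H_edges" and "e \<noteq> f"
    and "monomorphism e f \<phi>"
    and "\<forall>x \<in> H_minus_edges e f. \<phi> ` x = x"
  shows "\<forall>y \<in> H_minus_vertices e f. \<phi> y = y"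
proof (rule ballI, rule ccontr)
  fix y assume y: "y \<in> H_minus_vertices e f" and moved: "\<phi> y \<noteq> y"
  have inj: "inj_on \<phi> (\<Union>(H_minus_edges e f))" and "\<phi> y \<in> H_vertices"
    using assms(4) y unfolding monomorphism_def H_minus_vertices_def by auto
  moreover have "y \<in> H_vertices"
    using y H_vertices_cover unfolding H_minus_vertices_def H_minus_edges_def by blast
  ultimately have "3 \<le> card (separating_edges H_edges (\<phi> y) y)"
    using moved by (intro H_separating_edges_card)
  then have "separating_edges (H_minus_edges e f) (\<phi> y) y \<noteq> {}"
    unfolding H_minus_edges_def by (rule separating_edges_Diff_nonempty[OF finite_H_edges])
  moreover have "y \<in> \<Union>(H_minus_edges e f)"
    using y unfolding H_minus_vertices_def .
  ultimately show False
    using separating_edges_edge_fixing_map_empty[OF inj assms(5)] by blast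
qed

end
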